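(* For every $c>0$ there is $C>0$ such that the following holds. Let $h\ge1$, $P\in\mathcal C(h)$, and suppose ${\rm diam}_2(P_i)\le\Delta\cdot{\rm diam}_2(P)$ for every hole $P_i$, where $\Delta\le c/h$. Then for every $s\in P$ there is a path in $P$ from $s$ to a point of $\partial P_0$ of length at most $C\,{\rm diam}_2(P)$.
   Context: $\mathcal C(h)$ is the family of polygonal domains $P=P_0\setminus\bigcup_{i=1}^h\operatorname{int}(P_i)$ with $P_0$ a convex polygon and $P_1,\dots,P_h$ pairwise disjoint convex polygons (holes) in the interior of $P_0$; ${\rm diam}_2(\cdot)$ denotes Euclidean diameter. *)

theory Defs
  imports "HOL-Analysis.Analysis"
begin

definition convex_polygon :: "(real^2) set \<Rightarrow> bool" where
  "convex_polygon S \<longleftrightarrow> (\<exists>V. finite V \<and> S = convex hull V) \<and> interior S \<noteq> {}"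

definition path_length :: "(real \<Rightarrow> 'a::metric_space) \<Rightarrow> ereal" where
  "path_length g = (SUP tn \<in> {(t, n). t 0 = 0 \<and> t n = 1 \<and> (\<forall>i<n. t i \<le> t (Suc i))}.
      ereal (\<Sum>i<snd tn. dist (g (fst tn i)) (g (fst tn (Suc i)))))"

definition poly_domain :: "(real^2) set \<Rightarrow> (nat \<Rightarrow> (real^2) set) \<Rightarrow> nat \<Rightarrow> (real^2) set" where
  "poly_domain P0 H h = P0 - (\<Union>i\<in>{1..h}. interior (H i))"

definition in_class_C :: "(real^2) set \<Rightarrow> (nat \<Rightarrow> (real^2) set) \<Rightarrow> nat \<Rightarrow> bool" where
  "in_class_C P0 H h \<longleftrightarrow> convex_polygon P0 \<and>
     (\<forall>i\<in>{1..h}. convex_polygon (H i) \<and> H i \<subseteq> interior P0) \<and>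
     (\<forall>i\<in>{1..h}. \<forall>j\<in>{1..h}. i \<noteq> j \<longrightarrow> H i \<inter> H j = {})"

end

theory Submission
  imports Defs
begin

text \<open>Walk straight up from \<open>s\<close>. If the vertical ray meets no hole, it leaves \<open>P\<^sub>0\<close>
  after a segment of length at most \<open>diam P\<close>. Otherwise stop at the first hole met and follow
  its lower boundary, the graph of a convex function, up to the rightmost abscissa of that hole.
  This detour costs the horizontal and vertical progress plus at most three diameters of the
  hole, and afterwards the hole no longer extends to the right of the current point, so each
  hole is bypassed at most once. Since the net progress in each coordinate is at most
  \<open>diam P\<close>, the resulting path has length at most
  \<open>2 diam P + 3 \<Sum>\<^sub>i diam P\<^sub>i \<le> (2 + 3c) diam P\<close>.\<close>

text \<open>A potential \<open>\<Phi>\<close> whose increments dominate the displacements of \<open>g\<close> certifies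
  \<open>\<Phi> 1 - \<Phi> 0\<close> as a bound on the length of \<open>g\<close>; unlike bounds on \<open>path_length\<close>, such certificates
  simply add up along joins of paths.\<close>
definition certified_length :: "(real \<Rightarrow> 'a::metric_space) \<Rightarrow> real \<Rightarrow> bool" where
  "certified_length g L \<longleftrightarrow> (\<exists>\<Phi>. \<Phi> 1 - \<Phi> 0 \<le> L \<and>
     (\<forall>s t. 0 \<le> s \<longrightarrow> s \<le> t \<longrightarrow> t \<le> 1 \<longrightarrow> dist (g s) (g t) \<le> \<Phi> t - \<Phi> s))"

lemma path_length_le_certified:
  assumes "certified_length g L"
  shows "path_length g \<le> ereal L"
proof -
  obtain \<Phi> where \<Phi>: "\<Phi> 1 - \<Phi> 0 \<le> L"
    "\<And>s t. 0 \<le> s \<Longrightarrow> s \<le> t \<Longrightarrow> t \<le> 1 \<Longrightarrow> dist (g s) (g t) \<le> \<Phi> t - \<Phi> s"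
    using assms unfolding certified_length_def by blast
  show ?thesis unfolding path_length_def
  proof (rule SUP_least)
    fix tn :: "(nat \<Rightarrow> real) \<times> nat"
    assume "tn \<in> {(t, n). t 0 = 0 \<and> t n = 1 \<and> (\<forall>i<n. t i \<le> t (Suc i))}"
    then obtain t n where tn: "tn = (t, n)" and t: "t 0 = 0" "t n = 1" "\<forall>i<n. t i \<le> t (Suc i)"
      by blast
    have mono: "t i \<le> t j" if "i \<le> j" "j \<le> n" for i j
      by (rule lift_Suc_mono_le_ivl[of "{..<n}" t]) (use t(3) that in auto)
    have "(\<Sum>i<n. dist (g (t i)) (g (t (Suc i)))) \<le> (\<Sum>i<n. \<Phi> (t (Suc i)) - \<Phi> (t i))"
    proof (rule sum_mono)
      fix i assume "i \<in> {..<n}"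
      then show "dist (g (t i)) (g (t (Suc i))) \<le> \<Phi> (t (Suc i)) - \<Phi> (t i)"
        using \<Phi>(2) mono[of 0 i] mono[of "Suc i" n] t by simp
    qed
    also have "\<dots> = \<Phi> 1 - \<Phi> 0"
      using sum_lessThan_telescope[of "\<lambda>i. \<Phi> (t i)" n] t by simp
    finally show "ereal (\<Sum>i<snd tn. dist (g (fst tn i)) (g (fst tn (Suc i)))) \<le> ereal L"
      using \<Phi>(1) tn by simp
  qed
qed

lemma certified_length_mono: "certified_length g L \<Longrightarrow> L \<le> L' \<Longrightarrow> certified_length g L'"
  unfolding certified_length_def by force

lemma certified_length_linepath:
  "certified_length (linepath a b :: real \<Rightarrow> 'a::real_normed_vector) (dist a b)"
  unfolding certified_length_def
proof (intro exI[of _ "\<lambda>t. t * dist a b"] conjI allI impI)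
  fix s t :: real assume "0 \<le> s" "s \<le> t" "t \<le> 1"
  moreover have "linepath a b s - linepath a b t = (t - s) *\<^sub>R (a - b)"
    unfolding linepath_def by (simp add: algebra_simps)
  ultimately have "dist (linepath a b s) (linepath a b t) = (t - s) * dist a b"
    by (simp add: dist_norm)
  then show "dist (linepath a b s) (linepath a b t) \<le> t * dist a b - s * dist a b"
    by (simp add: algebra_simps)
qed simp

lemma certified_length_join:
  assumes "certified_length g1 L1" "certified_length g2 L2" "pathfinish g1 = pathstart g2"
  shows "certified_length (g1 +++ g2) (L1 + L2)"
proof -
  obtain \<Phi>1 where \<Phi>1: "\<Phi>1 1 - \<Phi>1 0 \<le> L1"
    "\<And>s t. 0 \<le> s \<Longrightarrow> s \<le> t \<Longrightarrow> t \<le> 1 \<Longrightarrow> dist (g1 s) (g1 t) \<le> \<Phi>1 t - \<Phi>1 s"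
    using assms(1) unfolding certified_length_def by blast
  obtain \<Phi>2 where \<Phi>2: "\<Phi>2 1 - \<Phi>2 0 \<le> L2"
    "\<And>s t. 0 \<le> s \<Longrightarrow> s \<le> t \<Longrightarrow> t \<le> 1 \<Longrightarrow> dist (g2 s) (g2 t) \<le> \<Phi>2 t - \<Phi>2 s"
    using assms(2) unfolding certified_length_def by blast
  have joint: "g1 1 = g2 0" using assms(3) by (simp add: pathfinish_def pathstart_def)
  define \<Phi> where
    "\<Phi> t = (if t \<le> 1/2 then \<Phi>1 (2 * t) else \<Phi>1 1 - \<Phi>2 0 + \<Phi>2 (2 * t - 1))" for t :: real
  show ?thesis unfolding certified_length_def
  proof (intro exI[of _ \<Phi>] conjI allI impI)
    show "\<Phi> 1 - \<Phi> 0 \<le> L1 + L2" using \<Phi>1(1) \<Phi>2(1) by (simp add: \<Phi>_def)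
  next
    fix s t :: real assume st: "0 \<le> s" "s \<le> t" "t \<le> 1"
    consider "t \<le> 1/2" | "s \<le> 1/2" "1/2 < t" | "1/2 < s" by linarith
    then show "dist ((g1 +++ g2) s) ((g1 +++ g2) t) \<le> \<Phi> t - \<Phi> s"
    proof cases
      case 1
      then show ?thesis using \<Phi>1(2)[of "2 * s" "2 * t"] st by (simp add: joinpaths_def \<Phi>_def)
    next
      case 2
      have "dist (g1 (2 * s)) (g2 (2 * t - 1))
          \<le> dist (g1 (2 * s)) (g1 1) + dist (g2 0) (g2 (2 * t - 1))"
        using dist_triangle[of "g1 (2 * s)" "g2 (2 * t - 1)" "g1 1"] joint
        by (simp add: dist_commute)
      also have "\<dots> \<le> (\<Phi>1 1 - \<Phi>1 (2 * s)) + (\<Phi>2 (2 * t - 1) - \<Phi>2 0)"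
        using \<Phi>1(2)[of "2 * s" 1] \<Phi>2(2)[of 0 "2 * t - 1"] st 2 by simp
      finally show ?thesis using 2 by (simp add: joinpaths_def \<Phi>_def)
    next
      case 3
      then show ?thesis
        using \<Phi>2(2)[of "2 * s - 1" "2 * t - 1"] st by (simp add: joinpaths_def \<Phi>_def)
    qed
  qed
qed

definition pt :: "real \<Rightarrow> real \<Rightarrow> real^2" where
  "pt x y = (\<chi> i. if i = 1 then x else y)"

lemma pt_nth [simp]: "pt x y $ 1 = x" "pt x y $ 2 = y"
  unfolding pt_def by auto

lemma pt_eta [simp]: "pt (p$1) (p$2) = p"
  unfolding pt_def vec_eq_iff forall_2 by simp

lemma pt_eq_iff [simp]: "pt a b = pt c d \<longleftrightarrow> a = c \<and> b = d"
  by (metis pt_nth)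

lemma pt_add [simp]: "pt a b + pt c d = pt (a + c) (b + d)"
  and pt_diff [simp]: "pt a b - pt c d = pt (a - c) (b - d)"
  and scaleR_pt [simp]: "u *\<^sub>R pt a b = pt (u * a) (u * b)"
  unfolding pt_def vec_eq_iff forall_2 by simp_all

lemma dist_pt_le: "dist (pt a b) (pt c d) \<le> \<bar>a - c\<bar> + \<bar>b - d\<bar>"
proof -
  have "dist (pt a b) (pt c d) \<le> (\<Sum>i\<in>UNIV. \<bar>pt (a - c) (b - d) $ i\<bar>)"
    unfolding dist_norm pt_diff by (rule norm_le_l1_cart)
  then show ?thesis by (simp add: sum_2)
qed

lemma closed_segment_vertical:
  "closed_segment (pt x a) (pt x b) = pt x ` closed_segment a b"
proof -
  have "(1 - u) *\<^sub>R pt x a + u *\<^sub>R pt x b = pt x ((1 - u) *\<^sub>R a + u *\<^sub>R b)" for u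
    by (simp add: algebra_simps)
  then show ?thesis by (auto simp: closed_segment_def)
qed

lemma continuous_on_pt [continuous_intros]:
  "continuous_on S f \<Longrightarrow> continuous_on S g \<Longrightarrow> continuous_on S (\<lambda>t. pt (f t) (g t))"
  unfolding pt_def
proof (intro continuous_intros)
  fix i :: 2
  assume "continuous_on S f" "continuous_on S g"
  then show "continuous_on S (\<lambda>x. if i = 1 then f x else g x)" by (cases "i = 1") auto
qed

lemma component_diff_le_dist: "\<bar>p$k - q$k\<bar> \<le> dist p (q::real^'n)"
  using dist_vec_nth_le[of p k q] by (simp add: dist_real_def)

lemma interior_ray:
  fixes p v :: "'a::real_normed_vector"
  assumes "p \<in> interior S"
  shows "\<exists>e>0. \<forall>t. 0 \<le> t \<longrightarrow> t < e \<longrightarrow> p + t *\<^sub>R v \<in> S"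
proof -
  obtain r where r: "r > 0" "ball p r \<subseteq> S" using assms by (meson mem_interior)
  have "p + t *\<^sub>R v \<in> S" if "0 \<le> t" "t < r / (norm v + 1)" for t
  proof -
    have "t * norm v \<le> t * (norm v + 1)" using that by (simp add: mult_left_mono)
    also have "\<dots> < r" using that by (simp add: pos_less_divide_eq add_nonneg_pos)
    finally show ?thesis using r that by (auto simp: dist_norm)
  qed
  then show ?thesis using r by (intro exI[of _ "r / (norm v + 1)"]) (simp add: add_nonneg_pos)
qed

lemma convex_vertical_slices:
  assumes "convex K" "pt a y \<in> K" "pt b y' \<in> K" "t \<in> {a..b}"
  shows "\<exists>y''. pt t y'' \<in> K"
proof -
  have "convex ((\<lambda>p. p$1) ` K)"
    using assms(1) by (intro convex_linear_image bounded_linear.linear bounded_linear_vec_nth)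
  then have "closed_segment a b \<subseteq> (\<lambda>p. p$1) ` K"
    using assms(2,3) by (intro closed_segment_subset) (force+)
  then obtain p where "p \<in> K" "p$1 = t"
    using assms(4) by (auto simp: closed_segment_eq_real_ivl)
  then show ?thesis by (metis pt_eta)
qed

definition lower_envelope :: "(real^2) set \<Rightarrow> real \<Rightarrow> real" where
  "lower_envelope K t = Inf {y. pt t y \<in> K}"

lemma closed_vertical_slice:
  assumes "closed K" shows "closed {y. pt t y \<in> K}"
proof -
  have "continuous_on UNIV (pt t)" by (intro continuous_intros)
  then have "closed (pt t -` K)"
    by (intro continuous_closed_vimage[OF assms]) (simp add: continuous_on_eq_continuous_at)
  then show ?thesis by (simp add: vimage_def)
qed

lemma bounded_vertical_slice:
  assumes "bounded K" shows "bounded {y. pt t y \<in> K}"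
proof -
  obtain M where M: "\<forall>p\<in>K. norm p \<le> M" using assms bounded_iff by blast
  have "\<bar>y\<bar> \<le> M" if "pt t y \<in> K" for y
    using component_le_norm_cart[of "pt t y" 2] M that by force
  then show ?thesis unfolding bounded_iff by auto
qed

lemma lower_envelope_le: "bounded K \<Longrightarrow> pt t y \<in> K \<Longrightarrow> lower_envelope K t \<le> y"
  unfolding lower_envelope_def
  by (intro cInf_lower bounded_imp_bdd_below bounded_vertical_slice) auto

lemma lower_envelope_in:
  assumes "compact K" "pt t y \<in> K" shows "pt t (lower_envelope K t) \<in> K"
proof -
  have "Inf {y. pt t y \<in> K} \<in> {y. pt t y \<in> K}"
    using assms compact_imp_closed compact_imp_bounded
    by (intro closed_contains_Inf closed_vertical_slice bounded_imp_bdd_below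
        bounded_vertical_slice) auto
  then show ?thesis by (simp add: lower_envelope_def)
qed

lemma lower_envelope_not_interior:
  assumes "bounded K" "pt t y \<in> K" shows "pt t (lower_envelope K t) \<notin> interior K"
proof
  assume "pt t (lower_envelope K t) \<in> interior K"
  then obtain e where e: "e > 0"
    "\<forall>s. 0 \<le> s \<longrightarrow> s < e \<longrightarrow> pt t (lower_envelope K t) + s *\<^sub>R pt 0 (-1) \<in> K"
    using interior_ray by blast
  then have "pt t (lower_envelope K t - e/2) \<in> K" by simp
  then have "lower_envelope K t \<le> lower_envelope K t - e/2"
    using lower_envelope_le[OF assms(1)] by blast
  then show False using e by simp
qed

lemma lower_envelope_eqI:
  assumes K: "compact K" "convex K" and y: "pt t y \<in> K" "pt t y \<notin> interior K"
    and b: "pt t b \<in> interior K" "y < b"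
  shows "lower_envelope K t = y"
proof (rule ccontr)
  define l where "l = lower_envelope K t"
  assume "lower_envelope K t \<noteq> y"
  then have l: "l < y"
    using lower_envelope_le[OF compact_imp_bounded[OF K(1)] y(1)] by (simp add: l_def)
  have "pt t l \<in> closure K"
    using lower_envelope_in[OF K(1) y(1)] closure_subset by (auto simp: l_def)
  then have "open_segment (pt t b) (pt t l) \<subseteq> interior K"
    by (rule in_interior_closure_convex_segment[OF K(2) b(1)])
  moreover have "pt t y \<in> open_segment (pt t b) (pt t l)"
  proof -
    define u where "u = (b - y) / (b - l)"
    have u: "0 < u" "u < 1" using b(2) l by (auto simp: u_def)
    have "u * (b - l) = b - y" using l b(2) by (simp add: u_def)
    then have "(1 - u) * b + u * l = y" by (simp add: algebra_simps)
    then have "pt t y = (1 - u) *\<^sub>R pt t b + u *\<^sub>R pt t l" by (simp add: algebra_simps)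
    moreover have "pt t b \<noteq> pt t l" using b(2) l by simp
    ultimately show ?thesis using u by (auto simp: in_segment)
  qed
  ultimately show False using y(2) by blast
qed

lemma convex_on_lower_envelope:
  assumes K: "compact K" "convex K" and slices: "\<forall>t\<in>{a..b}. \<exists>y. pt t y \<in> K"
  shows "convex_on {a..b} (lower_envelope K)"
proof (rule convex_onI)
  fix u s t :: real assume u: "0 < u" "u < 1" and st: "s \<in> {a..b}" "t \<in> {a..b}"
  have "pt r (lower_envelope K r) \<in> K" if "r \<in> {a..b}" for r
    using slices that lower_envelope_in[OF K(1)] by blast
  then have "(1 - u) *\<^sub>R pt s (lower_envelope K s) + u *\<^sub>R pt t (lower_envelope K t) \<in> K"
    using st u by (intro convexD_alt[OF K(2)]) auto
  then have "pt ((1 - u) *\<^sub>R s + u *\<^sub>R t)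
      ((1 - u) * lower_envelope K s + u * lower_envelope K t) \<in> K"
    by simp
  then show "lower_envelope K ((1 - u) *\<^sub>R s + u *\<^sub>R t)
      \<le> (1 - u) * lower_envelope K s + u * lower_envelope K t"
    using lower_envelope_le[OF compact_imp_bounded[OF K(1)]] by blast
qed simp

lemma lower_envelope_lower_semicontinuous:
  assumes K: "compact K" and slices: "\<forall>t\<in>S. \<exists>y. pt t y \<in> K" and "e > 0"
  shows "\<forall>\<^sub>F t in at t0 within S. lower_envelope K t0 - e < lower_envelope K t"
proof -
  define T where "T = (\<lambda>p. p$1) ` (K \<inter> {p. p$2 \<le> lower_envelope K t0 - e})"
  have "compact T" unfolding T_def
    using K by (intro compact_continuous_image compact_Int_closed closed_Collect_le
        continuous_intros) auto
  moreover have "t0 \<notin> T"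
  proof
    assume "t0 \<in> T"
    then obtain p where p: "p \<in> K" "p$1 = t0" "p$2 \<le> lower_envelope K t0 - e"
      by (auto simp: T_def)
    then have "pt t0 (p$2) \<in> K" by (metis pt_eta)
    then have "lower_envelope K t0 \<le> p$2" by (rule lower_envelope_le[OF compact_imp_bounded[OF K]])
    then show False using p(3) \<open>e > 0\<close> by simp
  qed
  ultimately have "\<forall>\<^sub>F t in nhds t0. t \<in> - T"
    by (intro eventually_nhds_in_open) (auto intro: compact_imp_closed)
  then show ?thesis unfolding eventually_at_filter
  proof (rule eventually_mono, intro impI)
    fix t assume t: "t \<in> - T" "t \<noteq> t0" "t \<in> S"
    then obtain y where "pt t y \<in> K" using slices by blast
    then have lower: "pt t (lower_envelope K t) \<in> K" by (rule lower_envelope_in[OF K])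
    show "lower_envelope K t0 - e < lower_envelope K t"
    proof (rule ccontr)
      assume "\<not> lower_envelope K t0 - e < lower_envelope K t"
      then have "t \<in> T"
        using lower unfolding T_def by (intro image_eqI[of _ _ "pt t (lower_envelope K t)"]) auto
      then show False using t(1) by blast
    qed
  qed
qed

lemma convex_on_upper_semicontinuous:
  fixes f :: "real \<Rightarrow> real"
  assumes f: "convex_on {a..b} f" and t0: "t0 \<in> {a..b}" and "e > 0"
  shows "\<forall>\<^sub>F t in at t0 within {a..b}. f t < f t0 + e"
proof -
  define k where "k = \<bar>(f b - f t0) / (b - t0)\<bar> + \<bar>(f a - f t0) / (t0 - a)\<bar> + 1"
  have k: "k > 0" "(f b - f t0) / (b - t0) \<le> k" "(f a - f t0) / (t0 - a) \<le> k"
    unfolding k_def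
    using abs_ge_self[of "(f b - f t0) / (b - t0)"] abs_ge_zero[of "(f b - f t0) / (b - t0)"]
      abs_ge_self[of "(f a - f t0) / (t0 - a)"] abs_ge_zero[of "(f a - f t0) / (t0 - a)"]
    by linarith+
  have slope: "f t - f t0 \<le> k * \<bar>t - t0\<bar>" if t: "t \<in> {a..b}" for t
  proof (cases "t0 \<le> t")
    case True
    have "f t \<le> (f b - f t0) / (b - t0) * (t - t0) + f t0"
      using t t0 True by (intro convex_onD_Icc' convex_on_subset[OF f]) auto
    also have "\<dots> \<le> k * (t - t0) + f t0"
      using True by (intro add_right_mono mult_right_mono[OF k(2)]) simp
    finally show ?thesis using True by simp
  next
    case False
    have "f t \<le> (f a - f t0) / (t0 - a) * (t0 - t) + f t0"
      using t t0 False by (intro convex_onD_Icc'' convex_on_subset[OF f]) auto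
    also have "\<dots> \<le> k * (t0 - t) + f t0"
      using False by (intro add_right_mono mult_right_mono[OF k(3)]) simp
    finally show ?thesis using False by simp
  qed
  show ?thesis unfolding eventually_at
  proof (intro exI[of _ "e / k"] conjI ballI impI)
    fix t assume "t \<in> {a..b}" "t \<noteq> t0 \<and> dist t t0 < e / k"
    then have "k * \<bar>t - t0\<bar> < e" using k by (simp add: dist_real_def field_simps)
    then show "f t < f t0 + e" using slope[OF \<open>t \<in> {a..b}\<close>] by simp
  qed (use k \<open>e > 0\<close> in simp)
qed

lemma continuous_on_convex_lower_semicontinuous:
  fixes f :: "real \<Rightarrow> real"
  assumes "convex_on {a..b} f"
    and "\<And>t0 e. t0 \<in> {a..b} \<Longrightarrow> e > 0 \<Longrightarrow> \<forall>\<^sub>F t in at t0 within {a..b}. f t0 - e < f t"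
  shows "continuous_on {a..b} f"
  unfolding continuous_on_def
proof (intro ballI tendstoI)
  fix t0 e :: real assume "t0 \<in> {a..b}" "e > 0"
  with assms have "\<forall>\<^sub>F t in at t0 within {a..b}. f t0 - e < f t \<and> f t < f t0 + e"
    by (intro eventually_conj convex_on_upper_semicontinuous) auto
  then show "\<forall>\<^sub>F t in at t0 within {a..b}. dist (f t) (f t0) < e"
    by eventually_elim (simp add: dist_real_def abs_less_iff)
qed

lemma continuous_on_lower_envelope:
  assumes "compact K" "convex K" "\<forall>t\<in>{a..b}. \<exists>y. pt t y \<in> K"
  shows "continuous_on {a..b} (lower_envelope K)"
  by (rule continuous_on_convex_lower_semicontinuous[OF convex_on_lower_envelope[OF assms]])
    (rule lower_envelope_lower_semicontinuous[OF assms(1,3)])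

text \<open>A convex function decreases up to its minimum point \<open>m\<close> and increases afterwards, so its
  variation is dominated by the increments of \<open>V\<close> below.\<close>
lemma certified_length_convex_graph:
  fixes f :: "real \<Rightarrow> real"
  assumes f: "convex_on {a..b} f" and m: "m \<in> {a..b}" "\<And>t. t \<in> {a..b} \<Longrightarrow> f m \<le> f t"
  shows "certified_length (\<lambda>u. pt (linepath a b u) (f (linepath a b u)))
           ((b - a) + (f a - f m) + (f b - f m))"
proof -
  define V where "V t = (if t \<le> m then - f t else f t - 2 * f m)" for t
  have variation: "\<bar>f t - f s\<bar> \<le> V t - V s" if st: "a \<le> s" "s \<le> t" "t \<le> b" for s t
  proof -
    consider "t \<le> m" | "m < s" | "s \<le> m" "m < t" by linarith
    then show ?thesis
    proof cases
      case 1
      have "convex_on {s..m} f" using st 1 m(1) by (intro convex_on_subset[OF f]) auto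
      then have "f t \<le> max (f s) (f m)" using convex_on_le_max st 1 by auto
      then show ?thesis using m st 1 by (auto simp: V_def)
    next
      case 2
      have "convex_on {m..t} f" using st 2 m(1) by (intro convex_on_subset[OF f]) auto
      then have "f s \<le> max (f m) (f t)" using convex_on_le_max st 2 by auto
      then show ?thesis using m st 2 by (auto simp: V_def)
    next
      case 3
      then show ?thesis using m(2)[of s] m(2)[of t] st by (auto simp: V_def)
    qed
  qed
  have line: "linepath a b u = (1 - u) * a + u * b" for u by (simp add: linepath_def)
  have ab: "a \<le> b" using m(1) by simp
  have line_mono: "linepath a b s \<le> linepath a b t" if "s \<le> t" for s t
  proof -
    have "s * (b - a) \<le> t * (b - a)" using that ab by (intro mult_right_mono) auto
    then show ?thesis by (simp add: line algebra_simps)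
  qed
  have line_range: "linepath a b u \<in> {a..b}" if "u \<in> {0..1}" for u
    using linepath_in_path[OF that, of a b] by (simp add: closed_segment_eq_real_ivl ab)
  have "V b - V a = (f a - f m) + (f b - f m)"
    using m by (cases "b \<le> m") (auto simp: V_def)
  then show ?thesis unfolding certified_length_def
  proof (intro exI[of _ "\<lambda>u. linepath a b u + V (linepath a b u)"] conjI allI impI)
    fix s t :: real assume st: "0 \<le> s" "s \<le> t" "t \<le> 1"
    let ?s = "linepath a b s" and ?t = "linepath a b t"
    have "?s \<le> ?t" "a \<le> ?s" "?t \<le> b" using line_mono line_range st by auto
    then show "dist (pt ?s (f ?s)) (pt ?t (f ?t)) \<le> ?t + V ?t - (?s + V ?s)"
      using dist_pt_le[of ?s "f ?s" ?t "f ?t"] variation[of ?s ?t] by (simp add: abs_minus_commute)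
  qed (simp add: line)
qed

lemma lower_envelope_path:
  assumes K: "compact K" "convex K" and ab: "a \<le> b" and slices: "\<forall>t\<in>{a..b}. \<exists>y. pt t y \<in> K"
  defines "\<gamma> \<equiv> \<lambda>u. pt (linepath a b u) (lower_envelope K (linepath a b u))"
  shows "path \<gamma>" and "path_image \<gamma> = (\<lambda>t. pt t (lower_envelope K t)) ` {a..b}"
    and "pathstart \<gamma> = pt a (lower_envelope K a)" and "pathfinish \<gamma> = pt b (lower_envelope K b)"
    and "certified_length \<gamma> (b - a + 2 * diameter K)"
proof -
  have image: "linepath a b ` {0..1} = {a..b}"
    by (simp add: linepath_image_01 closed_segment_eq_real_ivl ab)
  have cont: "continuous_on {a..b} (lower_envelope K)"
    by (rule continuous_on_lower_envelope[OF K slices])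
  show "path \<gamma>" unfolding path_def \<gamma>_def
    by (intro continuous_intros continuous_on_compose2[OF cont]) (auto simp: image)
  show "path_image \<gamma> = (\<lambda>t. pt t (lower_envelope K t)) ` {a..b}"
    unfolding path_image_def \<gamma>_def image[symmetric] by (simp add: image_image)
  show "pathstart \<gamma> = pt a (lower_envelope K a)" "pathfinish \<gamma> = pt b (lower_envelope K b)"
    by (simp_all add: \<gamma>_def pathstart_def pathfinish_def linepath_def)
  obtain m where m: "m \<in> {a..b}" "\<And>t. t \<in> {a..b} \<Longrightarrow> lower_envelope K m \<le> lower_envelope K t"
    using continuous_attains_inf[OF compact_Icc _ cont] ab by auto
  have rise: "lower_envelope K t - lower_envelope K m \<le> diameter K" if "t \<in> {a..b}" for t
  proof -
    have "pt t (lower_envelope K t) \<in> K" "pt m (lower_envelope K m) \<in> K"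
      using slices that m(1) lower_envelope_in[OF K(1)] by blast+
    then have "dist (pt t (lower_envelope K t)) (pt m (lower_envelope K m)) \<le> diameter K"
      by (rule diameter_bounded_bound[OF compact_imp_bounded[OF K(1)]])
    then show ?thesis
      using component_diff_le_dist[of "pt t (lower_envelope K t)" 2 "pt m (lower_envelope K m)"]
      by simp
  qed
  have "certified_length \<gamma> ((b - a) + (lower_envelope K a - lower_envelope K m)
      + (lower_envelope K b - lower_envelope K m))"
    unfolding \<gamma>_def using m
    by (intro certified_length_convex_graph convex_on_lower_envelope K slices)
  then show "certified_length \<gamma> (b - a + 2 * diameter K)"
    by (rule certified_length_mono) (use rise[of a] rise[of b] ab in simp)
qed

lemma convex_polygonD:
  assumes "convex_polygon S" shows "compact S" "convex S" "S \<noteq> {}"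
  using assms interior_empty unfolding convex_polygon_def
  by (auto intro: compact_convex_hull finite_imp_compact)

locale polygonal_domain =
  fixes P0 :: "(real^2) set" and H :: "nat \<Rightarrow> (real^2) set" and h :: nat
  assumes in_class: "in_class_C P0 H h"
begin

abbreviation P where "P \<equiv> poly_domain P0 H h"

lemma outer: "compact P0" "convex P0"
  using in_class convex_polygonD unfolding in_class_C_def by auto

lemma hole:
  assumes "i \<in> {1..h}"
  shows "compact (H i)" "convex (H i)" "H i \<subseteq> interior P0" "H i \<noteq> {}"
  using assms in_class convex_polygonD unfolding in_class_C_def by auto

lemma diameter_hole_nonneg: "i \<in> {1..h} \<Longrightarrow> 0 \<le> diameter (H i)"
  by (intro diameter_ge_0 compact_imp_bounded hole)

lemma holes_disjoint: "i \<in> {1..h} \<Longrightarrow> j \<in> {1..h} \<Longrightarrow> i \<noteq> j \<Longrightarrow> H i \<inter> H j = {}"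
  using in_class unfolding in_class_C_def by auto

lemma mem_domain_iff: "p \<in> P \<longleftrightarrow> p \<in> P0 \<and> (\<forall>i\<in>{1..h}. p \<notin> interior (H i))"
  unfolding poly_domain_def by auto

lemma bounded_domain: "bounded P"
  using outer(1) compact_imp_bounded bounded_subset mem_domain_iff by blast

lemma frontier_outer_subset_domain: "frontier P0 \<subseteq> P"
proof
  fix p assume p: "p \<in> frontier P0"
  have "p \<in> P0" "p \<notin> interior P0"
    using p outer(1) by (auto simp: frontier_def compact_imp_closed)
  moreover have "interior (H i) \<subseteq> interior P0" if "i \<in> {1..h}" for i
    using hole(3)[OF that] interior_subset by blast
  ultimately show "p \<in> P" using mem_domain_iff by blast
qed

definition right_end :: "nat \<Rightarrow> real" where
  "right_end i = Sup ((\<lambda>p. p$1) ` H i)"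

lemma right_end_max:
  assumes "i \<in> {1..h}"
  shows "\<exists>p\<in>H i. p$1 = right_end i" and "\<And>p. p \<in> H i \<Longrightarrow> p$1 \<le> right_end i"
proof -
  have compact: "compact ((\<lambda>p. p$1) ` H i)"
    using hole(1)[OF assms] by (intro compact_continuous_image continuous_intros)
  then have "right_end i \<in> (\<lambda>p. p$1) ` H i"
    unfolding right_end_def using hole(4)[OF assms]
    by (intro closed_contains_Sup)
      (auto intro: compact_imp_closed bounded_imp_bdd_above compact_imp_bounded)
  then show "\<exists>p\<in>H i. p$1 = right_end i" by auto
  show "p$1 \<le> right_end i" if "p \<in> H i" for p
    unfolding right_end_def using compact that
    by (intro cSup_upper) (auto intro: bounded_imp_bdd_above compact_imp_bounded)
qed

definition holes_right_of :: "real^2 \<Rightarrow> nat set" where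
  "holes_right_of q = {j \<in> {1..h}. q$1 < right_end j}"

lemma vertical_segment_in_domain:
  assumes q: "q \<in> P" and top: "pt (q$1) y1 \<in> P0" "q$2 \<le> y1"
    and free: "\<And>y j. q$2 \<le> y \<Longrightarrow> y \<le> y1 \<Longrightarrow> j \<in> {1..h} \<Longrightarrow> pt (q$1) y \<notin> interior (H j)"
  shows "closed_segment q (pt (q$1) y1) \<subseteq> P"
proof
  fix p assume p: "p \<in> closed_segment q (pt (q$1) y1)"
  have "p \<in> P0"
    using p closed_segment_subset[OF _ top(1) outer(2)] q mem_domain_iff by blast
  moreover obtain y where "p = pt (q$1) y" "y \<in> {q$2..y1}"
    using p closed_segment_vertical[of "q$1" "q$2" y1] top(2)
    by (auto simp: closed_segment_eq_real_ivl)
  ultimately show "p \<in> P" using free mem_domain_iff by auto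
qed

lemma vertical_exit:
  assumes q: "q \<in> P" and free: "\<And>y j. q$2 \<le> y \<Longrightarrow> j \<in> {1..h} \<Longrightarrow> pt (q$1) y \<notin> interior (H j)"
  shows "\<exists>\<gamma>. path \<gamma> \<and> path_image \<gamma> \<subseteq> P \<and> pathstart \<gamma> = q \<and> pathfinish \<gamma> \<in> frontier P0 \<and>
           certified_length \<gamma> ((pathfinish \<gamma> - q)$1 + (pathfinish \<gamma> - q)$2)"
proof -
  define x y where "x = q$1" and "y = q$2"
  have q_pt: "q = pt x y" by (simp add: x_def y_def)
  define T where "T = {y..} \<inter> {y'. pt x y' \<in> P0}"
  have "y \<in> T" using q q_pt mem_domain_iff by (auto simp: T_def)
  moreover have "closed T" unfolding T_def
    using outer(1) by (intro closed_Int closed_atLeast closed_vertical_slice compact_imp_closed)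
  moreover have "bdd_above T" unfolding T_def
    using outer(1)
    by (intro bdd_above_Int2 bounded_imp_bdd_above bounded_vertical_slice compact_imp_bounded)
  ultimately have "Sup T \<in> T" by (intro closed_contains_Sup) auto
  define yt where "yt = Sup T"
  have top: "y \<le> yt" "pt x yt \<in> P0" using \<open>Sup T \<in> T\<close> by (auto simp: yt_def T_def)
  have "pt x yt \<notin> interior P0"
  proof
    assume "pt x yt \<in> interior P0"
    then obtain e where e: "e > 0" "\<forall>s. 0 \<le> s \<longrightarrow> s < e \<longrightarrow> pt x yt + s *\<^sub>R pt 0 1 \<in> P0"
      using interior_ray by blast
    then have "yt + e/2 \<in> T" using top by (auto simp: T_def)
    then have "yt + e/2 \<le> yt" unfolding yt_def using \<open>bdd_above T\<close> by (rule cSup_upper)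
    then show False using e by simp
  qed
  then have frontier: "pt x yt \<in> frontier P0"
    using top outer(1) by (simp add: frontier_def compact_imp_closed)
  have "closed_segment q (pt x yt) \<subseteq> P"
    using vertical_segment_in_domain q top free unfolding x_def y_def by blast
  moreover have "certified_length (linepath q (pt x yt)) ((pt x yt - q)$1 + (pt x yt - q)$2)"
    using dist_pt_le[of x y x yt] top(1)
    by (intro certified_length_mono[OF certified_length_linepath]) (simp add: q_pt)
  ultimately show ?thesis using frontier by (intro exI[of _ "linepath q (pt x yt)"]) auto
qed

definition first_hit :: "real^2 \<Rightarrow> real" where
  "first_hit q = Inf {y. q$2 \<le> y \<and> (\<exists>j\<in>{1..h}. pt (q$1) y \<in> interior (H j))}"

lemma first_hit_le:
  assumes "j \<in> {1..h}" "q$2 \<le> y" "pt (q$1) y \<in> interior (H j)"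
  shows "first_hit q \<le> y"
  unfolding first_hit_def using assms by (intro cInf_lower) (auto simp: bdd_below_def)

lemma below_first_hit:
  assumes q: "q \<in> P" and y: "q$2 \<le> y" "y \<le> first_hit q" and j: "j \<in> {1..h}"
  shows "pt (q$1) y \<notin> interior (H j)"
proof
  assume inside: "pt (q$1) y \<in> interior (H j)"
  show False
  proof (cases "y = q$2")
    case True
    then show False using inside q j mem_domain_iff by (metis pt_eta)
  next
    case False
    obtain e where e: "e > 0" "\<forall>s. 0 \<le> s \<longrightarrow> s < e \<longrightarrow> pt (q$1) y + s *\<^sub>R pt 0 (-1) \<in> interior (H j)"
      using interior_ray[of _ "interior (H j)"] inside by (metis interior_interior)
    define s where "s = min (e/2) ((y - q$2)/2)"
    have "0 < s" "s < e" using e(1) y(1) False by (auto simp: s_def)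
    moreover have "s \<le> (y - q$2) / 2" unfolding s_def by (rule min.cobounded2)
    ultimately have "first_hit q \<le> y - s"
      using e(2) y(1) by (intro first_hit_le[OF j]) auto
    then show False using y(2) \<open>0 < s\<close> by simp
  qed
qed

lemma first_hit_in_hole:
  assumes "j0 \<in> {1..h}" "q$2 \<le> y0" "pt (q$1) y0 \<in> interior (H j0)"
  obtains i b where "i \<in> {1..h}" "q$2 \<le> first_hit q" "pt (q$1) (first_hit q) \<in> H i"
    "q$2 \<le> b" "pt (q$1) b \<in> interior (H i)"
proof -
  define B where "B j = {y. q$2 \<le> y \<and> pt (q$1) y \<in> interior (H j)}" for j
  have first_hit: "first_hit q = Inf (\<Union>j\<in>{1..h}. B j)"
    unfolding first_hit_def B_def by (rule arg_cong[where f = Inf]) blast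
  have B_ne: "(\<Union>j\<in>{1..h}. B j) \<noteq> {}" using assms by (auto simp: B_def)
  have B_bdd: "bdd_below (\<Union>j\<in>{1..h}. B j)" by (auto simp: B_def bdd_below_def)
  have "closure (\<Union>j\<in>{1..h}. B j) \<subseteq> (\<Union>j\<in>{1..h}. closure (B j))"
    by (intro closure_minimal closed_UN) (auto intro: closure_subset[THEN subsetD])
  then obtain i where i: "i \<in> {1..h}" "first_hit q \<in> closure (B i)"
    using closure_contains_Inf[OF B_ne B_bdd] unfolding first_hit by blast
  have "closure (B i) \<subseteq> {y. pt (q$1) y \<in> H i}"
    using hole(1)[OF i(1)] interior_subset
    by (intro closure_minimal closed_vertical_slice compact_imp_closed) (auto simp: B_def)
  moreover obtain b where "b \<in> B i" using i(2) by force
  moreover have "q$2 \<le> first_hit q"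
    unfolding first_hit using B_ne by (intro cInf_greatest) (auto simp: B_def)
  ultimately show thesis using that i by (auto simp: B_def)
qed

lemma first_hole_above:
  assumes q: "q \<in> P" and hit: "j0 \<in> {1..h}" "q$2 \<le> y0" "pt (q$1) y0 \<in> interior (H j0)"
  obtains i where "i \<in> {1..h}" "q$2 \<le> first_hit q" "pt (q$1) (first_hit q) \<in> H i"
    "closed_segment q (pt (q$1) (first_hit q)) \<subseteq> P"
    "lower_envelope (H i) (q$1) = first_hit q" "q$1 < right_end i"
proof -
  obtain i b where i: "i \<in> {1..h}" "q$2 \<le> first_hit q" "pt (q$1) (first_hit q) \<in> H i"
      and b: "q$2 \<le> b" "pt (q$1) b \<in> interior (H i)"
    using first_hit_in_hole[OF hit] by blast
  have free: "pt (q$1) (first_hit q) \<notin> interior (H i)"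
    using below_first_hit[OF q i(2) order_refl i(1)] .
  have "first_hit q < b" using first_hit_le[OF i(1) b] free b(2) by (metis order_le_less)
  then have "lower_envelope (H i) (q$1) = first_hit q"
    using lower_envelope_eqI[OF hole(1,2)[OF i(1)] i(3) free b(2)] by blast
  moreover obtain e where e: "e > 0" "\<forall>s. 0 \<le> s \<longrightarrow> s < e \<longrightarrow> pt (q$1) b + s *\<^sub>R pt 1 0 \<in> H i"
    using interior_ray b(2) by blast
  then have "pt (q$1 + e/2) b \<in> H i" by simp
  then have "q$1 < right_end i" using right_end_max(2)[OF i(1)] e(1) by force
  moreover have "closed_segment q (pt (q$1) (first_hit q)) \<subseteq> P"
    using vertical_segment_in_domain[OF q] i(2,3) hole(3)[OF i(1)] interior_subset
      below_first_hit[OF q] by blast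
  ultimately show thesis using that i by blast
qed

lemma lower_envelope_hole_in_domain:
  assumes i: "i \<in> {1..h}" and "pt t y \<in> H i"
  shows "pt t (lower_envelope (H i) t) \<in> P"
proof -
  have lower: "pt t (lower_envelope (H i) t) \<in> H i"
    using assms by (intro lower_envelope_in hole)
  moreover have "pt t (lower_envelope (H i) t) \<notin> interior (H i)"
    using assms by (intro lower_envelope_not_interior compact_imp_bounded hole)
  moreover have "pt t (lower_envelope (H i) t) \<notin> interior (H j)" if "j \<in> {1..h}" "j \<noteq> i" for j
    using lower holes_disjoint[OF i that(1)] that(2) interior_subset by blast
  moreover have "pt t (lower_envelope (H i) t) \<in> P0"
    using lower hole(3)[OF i] interior_subset by blast
  ultimately show ?thesis using mem_domain_iff by blast
qed

lemma detour_around_hole: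
  assumes q: "q \<in> P" and hit: "j0 \<in> {1..h}" "q$2 \<le> y0" "pt (q$1) y0 \<in> interior (H j0)"
  shows "\<exists>i\<in>holes_right_of q. \<exists>\<gamma>. path \<gamma> \<and> path_image \<gamma> \<subseteq> P \<and> pathstart \<gamma> = q \<and>
           holes_right_of (pathfinish \<gamma>) \<subseteq> holes_right_of q - {i} \<and>
           certified_length \<gamma> ((pathfinish \<gamma> - q)$1 + (pathfinish \<gamma> - q)$2 + 3 * diameter (H i))"
proof -
  obtain i where "i \<in> {1..h}" "q$2 \<le> first_hit q" "pt (q$1) (first_hit q) \<in> H i"
      "closed_segment q (pt (q$1) (first_hit q)) \<subseteq> P"
      "lower_envelope (H i) (q$1) = first_hit q" "q$1 < right_end i"
    using first_hole_above[OF assms] by blast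
  moreover define x y ys xr
    where "x = q$1" and "y = q$2" and "ys = first_hit q" and "xr = right_end i"
  ultimately have i: "i \<in> {1..h}" "y \<le> ys" "pt x ys \<in> H i" "closed_segment q (pt x ys) \<subseteq> P"
      "lower_envelope (H i) x = ys" "x < xr"
    by simp_all
  have q_pt: "q = pt x y" by (simp add: x_def y_def)
  obtain r where r: "r \<in> H i" "r$1 = xr" using right_end_max(1)[OF i(1)] by (auto simp: xr_def)
  then have r_pt: "pt xr (r$2) \<in> H i" by (metis pt_eta)
  have slices: "\<forall>t\<in>{x..xr}. \<exists>y'. pt t y' \<in> H i"
    using convex_vertical_slices[OF hole(2)[OF i(1)] i(3) r_pt] by blast
  define \<gamma> where "\<gamma> = (\<lambda>u. pt (linepath x xr u) (lower_envelope (H i) (linepath x xr u)))"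
  note boundary =
    lower_envelope_path[OF hole(1,2)[OF i(1)] less_imp_le[OF i(6)] slices, folded \<gamma>_def]
  define q' where "q' = pt xr (lower_envelope (H i) xr)"
  have joint: "pathfinish (linepath q (pt x ys)) = pathstart \<gamma>"
    using boundary(3) i(5) by simp
  have "ys - lower_envelope (H i) xr \<le> diameter (H i)"
  proof -
    have "q' \<in> H i" unfolding q'_def using r_pt by (rule lower_envelope_in[OF hole(1)[OF i(1)]])
    then have "dist (pt x ys) q' \<le> diameter (H i)"
      using i(3) by (intro diameter_bounded_bound compact_imp_bounded hole i(1))
    then show ?thesis using component_diff_le_dist[of "pt x ys" 2 q'] by (simp add: q'_def)
  qed
  then have "dist q (pt x ys) + (xr - x + 2 * diameter (H i))
      \<le> (q' - q)$1 + (q' - q)$2 + 3 * diameter (H i)"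
    using dist_pt_le[of x y x ys] i(2) by (simp add: q_pt q'_def)
  then have "certified_length (linepath q (pt x ys) +++ \<gamma>)
      ((q' - q)$1 + (q' - q)$2 + 3 * diameter (H i))"
    by (intro certified_length_mono[OF certified_length_join[OF
        certified_length_linepath boundary(5) joint]])
  moreover have "holes_right_of q' \<subseteq> holes_right_of q - {i}"
    using i(6) by (auto simp: holes_right_of_def q'_def x_def xr_def)
  moreover have "i \<in> holes_right_of q" using i(1,6) by (simp add: holes_right_of_def x_def xr_def)
  moreover have "path_image \<gamma> \<subseteq> P"
    using boundary(2) slices lower_envelope_hole_in_domain[OF i(1)] by auto
  then have "path_image (linepath q (pt x ys) +++ \<gamma>) \<subseteq> P"
    using i(4) path_image_join_subset[of "linepath q (pt x ys)" \<gamma>] by auto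
  moreover have "pathfinish (linepath q (pt x ys) +++ \<gamma>) = q'"
    using boundary(4) by (simp add: q'_def)
  ultimately show ?thesis
    using boundary(1) joint by (intro bexI[of _ i] exI[of _ "linepath q (pt x ys) +++ \<gamma>"]) auto
qed

lemma diameter_add_sum_holes_right_of_le:
  assumes "i \<in> holes_right_of q" "holes_right_of q' \<subseteq> holes_right_of q - {i}"
  shows "diameter (H i) + (\<Sum>j\<in>holes_right_of q'. diameter (H j))
           \<le> (\<Sum>j\<in>holes_right_of q. diameter (H j))"
proof -
  have "(\<Sum>j\<in>holes_right_of q'. diameter (H j)) \<le> (\<Sum>j\<in>holes_right_of q - {i}. diameter (H j))"
    using assms(2) diameter_hole_nonneg by (intro sum_mono2) (auto simp: holes_right_of_def)
  also have "\<dots> = (\<Sum>j\<in>holes_right_of q. diameter (H j)) - diameter (H i)"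
    using assms(1) by (simp add: sum_diff1 holes_right_of_def)
  finally show ?thesis by simp
qed

lemma exit_path:
  assumes "q \<in> P"
  shows "\<exists>\<gamma>. path \<gamma> \<and> path_image \<gamma> \<subseteq> P \<and> pathstart \<gamma> = q \<and> pathfinish \<gamma> \<in> frontier P0 \<and>
           certified_length \<gamma> ((pathfinish \<gamma> - q)$1 + (pathfinish \<gamma> - q)$2
             + 3 * (\<Sum>j\<in>holes_right_of q. diameter (H j)))"
  using assms
proof (induction "card (holes_right_of q)" arbitrary: q rule: less_induct)
  case less
  show ?case
  proof (cases "\<exists>j\<in>{1..h}. \<exists>y\<ge>q$2. pt (q$1) y \<in> interior (H j)")
    case False
    then obtain \<gamma> where \<gamma>: "path \<gamma>" "path_image \<gamma> \<subseteq> P" "pathstart \<gamma> = q"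
        "pathfinish \<gamma> \<in> frontier P0"
        "certified_length \<gamma> ((pathfinish \<gamma> - q)$1 + (pathfinish \<gamma> - q)$2)"
      using vertical_exit[OF less.prems] by blast
    moreover have "0 \<le> (\<Sum>j\<in>holes_right_of q. diameter (H j))"
      using diameter_hole_nonneg by (intro sum_nonneg) (simp add: holes_right_of_def)
    then have "certified_length \<gamma> ((pathfinish \<gamma> - q)$1 + (pathfinish \<gamma> - q)$2
        + 3 * (\<Sum>j\<in>holes_right_of q. diameter (H j)))"
      by (intro certified_length_mono[OF \<gamma>(5)]) simp
    ultimately show ?thesis by blast
  next
    case True
    then obtain i \<gamma>1 where i: "i \<in> holes_right_of q" and \<gamma>1: "path \<gamma>1" "path_image \<gamma>1 \<subseteq> P"
        "pathstart \<gamma>1 = q" "holes_right_of (pathfinish \<gamma>1) \<subseteq> holes_right_of q - {i}"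
        "certified_length \<gamma>1 ((pathfinish \<gamma>1 - q)$1 + (pathfinish \<gamma>1 - q)$2 + 3 * diameter (H i))"
      using detour_around_hole[OF less.prems] by blast
    define q' where "q' = pathfinish \<gamma>1"
    have "q' \<in> P" using \<gamma>1(2) pathfinish_in_path_image by (auto simp: q'_def)
    moreover have "card (holes_right_of q') < card (holes_right_of q)"
      using \<gamma>1(4) i by (intro psubset_card_mono) (auto simp: q'_def holes_right_of_def)
    ultimately obtain \<gamma>2 where \<gamma>2: "path \<gamma>2" "path_image \<gamma>2 \<subseteq> P" "pathstart \<gamma>2 = q'"
        "pathfinish \<gamma>2 \<in> frontier P0" "certified_length \<gamma>2 ((pathfinish \<gamma>2 - q')$1
          + (pathfinish \<gamma>2 - q')$2 + 3 * (\<Sum>j\<in>holes_right_of q'. diameter (H j)))"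
      using less.hyps by blast
    have sum: "diameter (H i) + (\<Sum>j\<in>holes_right_of q'. diameter (H j))
        \<le> (\<Sum>j\<in>holes_right_of q. diameter (H j))"
      using diameter_add_sum_holes_right_of_le[OF i \<gamma>1(4)] by (simp add: q'_def)
    have joint: "pathfinish \<gamma>1 = pathstart \<gamma>2" using \<gamma>2(3) by (simp add: q'_def)
    have "certified_length (\<gamma>1 +++ \<gamma>2) ((pathfinish \<gamma>2 - q)$1 + (pathfinish \<gamma>2 - q)$2
        + 3 * (\<Sum>j\<in>holes_right_of q. diameter (H j)))"
      using sum by (intro certified_length_mono[OF certified_length_join[OF \<gamma>1(5) \<gamma>2(5) joint]])
        (simp add: q'_def)
    moreover have "path (\<gamma>1 +++ \<gamma>2)" using \<gamma>1(1) \<gamma>2(1) joint by (rule path_join_imp)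
    moreover have "path_image (\<gamma>1 +++ \<gamma>2) \<subseteq> P"
      using \<gamma>1(2) \<gamma>2(2) path_image_join_subset[of \<gamma>1 \<gamma>2] by blast
    ultimately show ?thesis using \<gamma>1(3) \<gamma>2(4) by (intro exI[of _ "\<gamma>1 +++ \<gamma>2"]) simp
  qed
qed

lemma exit_path_length:
  assumes "s \<in> P"
  shows "\<exists>\<gamma>. path \<gamma> \<and> path_image \<gamma> \<subseteq> P \<and> pathstart \<gamma> = s \<and> pathfinish \<gamma> \<in> frontier P0 \<and>
           path_length \<gamma> \<le> ereal (2 * diameter P + 3 * (\<Sum>j\<in>{1..h}. diameter (H j)))"
proof -
  obtain \<gamma> where \<gamma>: "path \<gamma>" "path_image \<gamma> \<subseteq> P" "pathstart \<gamma> = s" "pathfinish \<gamma> \<in> frontier P0"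
      "certified_length \<gamma> ((pathfinish \<gamma> - s)$1 + (pathfinish \<gamma> - s)$2
        + 3 * (\<Sum>j\<in>holes_right_of s. diameter (H j)))"
    using exit_path[OF assms] by blast
  have "dist (pathfinish \<gamma>) s \<le> diameter P"
    using \<gamma>(4) frontier_outer_subset_domain assms
    by (intro diameter_bounded_bound bounded_domain) auto
  then have progress: "(pathfinish \<gamma> - s)$k \<le> diameter P" for k
    using component_diff_le_dist[of "pathfinish \<gamma>" k s] by simp
  have "(\<Sum>j\<in>holes_right_of s. diameter (H j)) \<le> (\<Sum>j\<in>{1..h}. diameter (H j))"
    by (intro sum_mono2) (auto simp: holes_right_of_def diameter_hole_nonneg)
  then have "certified_length \<gamma> (2 * diameter P + 3 * (\<Sum>j\<in>{1..h}. diameter (H j)))"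
    using progress[of 1] progress[of 2] by (intro certified_length_mono[OF \<gamma>(5)]) linarith
  then show ?thesis using \<gamma> path_length_le_certified by blast
qed

lemma exit_path_length_le:
  assumes "s \<in> P" and "0 \<le> c" and "\<Delta> \<le> c / real h"
    and "\<forall>i\<in>{1..h}. diameter (H i) \<le> \<Delta> * diameter P"
  shows "\<exists>\<gamma>. path \<gamma> \<and> path_image \<gamma> \<subseteq> P \<and> pathstart \<gamma> = s \<and> pathfinish \<gamma> \<in> frontier P0 \<and>
           path_length \<gamma> \<le> ereal ((2 + 3 * c) * diameter P)"
proof -
  have "real h * \<Delta> \<le> c"
    using assms(2,3) by (cases "h = 0") (auto simp: field_simps)
  have "(\<Sum>j\<in>{1..h}. diameter (H j)) \<le> (\<Sum>j\<in>{1..h}. \<Delta> * diameter P)"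
    using assms(4) by (intro sum_mono) auto
  also have "\<dots> = (real h * \<Delta>) * diameter P" by simp
  also have "\<dots> \<le> c * diameter P"
    using \<open>real h * \<Delta> \<le> c\<close> by (intro mult_right_mono diameter_ge_0 bounded_domain)
  finally have bound: "2 * diameter P + 3 * (\<Sum>j\<in>{1..h}. diameter (H j)) \<le> (2 + 3 * c) * diameter P"
    by (simp add: algebra_simps)
  obtain \<gamma> where \<gamma>: "path \<gamma>" "path_image \<gamma> \<subseteq> P" "pathstart \<gamma> = s" "pathfinish \<gamma> \<in> frontier P0"
      "path_length \<gamma> \<le> ereal (2 * diameter P + 3 * (\<Sum>j\<in>{1..h}. diameter (H j)))"
    using exit_path_length[OF assms(1)] by blast
  have "path_length \<gamma> \<le> ereal ((2 + 3 * c) * diameter P)"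
    using \<gamma>(5) by (rule order_trans) (simp only: ereal_less_eq(3) bound)
  then show ?thesis using \<gamma>(1-4) by blast
qed

end

theorem lemma3:
  shows "\<forall>c>0. \<exists>C>0. \<forall>(h::nat) P0 H (\<Delta>::real).
     h \<ge> 1 \<longrightarrow> in_class_C P0 H h \<longrightarrow> \<Delta> \<le> c / real h \<longrightarrow>
     (\<forall>i\<in>{1..h}. diameter (H i) \<le> \<Delta> * diameter (poly_domain P0 H h)) \<longrightarrow>
     (\<forall>s\<in>poly_domain P0 H h. \<exists>g. path g \<and> path_image g \<subseteq> poly_domain P0 H h \<and>
        pathstart g = s \<and> pathfinish g \<in> frontier P0 \<and>
        path_length g \<le> ereal (C * diameter (poly_domain P0 H h)))"
  apply (intro allI impI)
  subgoal for c
    by (intro exI[of _ "2 + 3 * c"] conjI allI impI ballI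
        polygonal_domain.exit_path_length_le[OF polygonal_domain.intro]) auto
  done

end
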